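(* Let $\xi>0$ be such that $D^TD-\xi^2I$ is nonsingular and let $h_\xi(\lambda)=\det H_\xi(\lambda)$. Then for every $\omega\ge0$ we have $\Im\, h_\xi(j\omega)=0$ and $\Re\, h_\xi'(j\omega)=0$, where $h_\xi'$ denotes the complex derivative of $h_\xi$.
   Context: Let $n,m,n_u,n_y$ be positive integers, $A_0,\dots,A_m\in\mathbb{R}^{n\times n}$, $B\in\mathbb{R}^{n\times n_u}$, $C\in\mathbb{R}^{n_y\times n}$, $D\in\mathbb{R}^{n_y\times n_u}$, delays $\tau_1,\dots,\tau_m\ge0$. For $\xi>0$ put $D_\xi=D^TD-\xi^2I_{n_u}$, $\tilde D_\xi=DD^T-\xi^2I_{n_y}$, and define $2n\times2n$ matrices $M_0=\begin{bmatrix} A_0-BD_\xi^{-1}D^TC & -BD_\xi^{-1}B^T\\ \xi^2 C^T\tilde D_\xi^{-1}C & -A_0^T+C^TDD_\xi^{-1}B^T\end{bmatrix}$, $M_i=\begin{bmatrix}A_i&0\\0&0\end{bmatrix}$, $M_{-i}=\begin{bmatrix}0&0\\0&-A_i^T\end{bmatrix}$, $1\le i\le m$, and $H_\xi(\lambda)=\lambda I-M_0-\sum_{i=1}^m\left(M_ie^{-\lambda\tau_i}+M_{-i}e^{\lambda\tau_i}\right)$ for $\lambda\in\mathbb{C}$. *)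

theory Defs
  imports "HOL-Analysis.Analysis"
begin

definition blockmat ::
  "real^'n^'n \<Rightarrow> real^'n^'n \<Rightarrow> real^'n^'n \<Rightarrow> real^'n^'n \<Rightarrow> real^('n + 'n)^('n + 'n)" where
  "blockmat P Q R S = (\<chi> i j. case i of
       Inl a \<Rightarrow> (case j of Inl b \<Rightarrow> P $ a $ b | Inr b \<Rightarrow> Q $ a $ b)
     | Inr a \<Rightarrow> (case j of Inl b \<Rightarrow> R $ a $ b | Inr b \<Rightarrow> S $ a $ b))"

definition Dxi :: "real^'u^'y \<Rightarrow> real \<Rightarrow> real^'u^'u" where
  "Dxi D \<xi> = transpose D ** D - \<xi>\<^sup>2 *\<^sub>R mat 1"

definition Dtxi :: "real^'u^'y \<Rightarrow> real \<Rightarrow> real^'y^'y" where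
  "Dtxi D \<xi> = D ** transpose D - \<xi>\<^sup>2 *\<^sub>R mat 1"

definition M0 :: "real^'n^'n \<Rightarrow> real^'u^'n \<Rightarrow> real^'n^'y \<Rightarrow> real^'u^'y \<Rightarrow> real
    \<Rightarrow> real^('n + 'n)^('n + 'n)" where
  "M0 A0 B C D \<xi> = blockmat
     (A0 - B ** matrix_inv (Dxi D \<xi>) ** transpose D ** C)
     (- (B ** matrix_inv (Dxi D \<xi>) ** transpose B))
     (\<xi>\<^sup>2 *\<^sub>R (transpose C ** matrix_inv (Dtxi D \<xi>) ** C))
     (- transpose A0 + transpose C ** D ** matrix_inv (Dxi D \<xi>) ** transpose B)"

definition Mpos :: "real^'n^'n \<Rightarrow> real^('n + 'n)^('n + 'n)" where
  "Mpos Ai = blockmat Ai 0 0 0"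

definition Mneg :: "real^'n^'n \<Rightarrow> real^('n + 'n)^('n + 'n)" where
  "Mneg Ai = blockmat 0 0 0 (- transpose Ai)"

text \<open>H_xi(lambda), with A 0 = A_0 and A i, tau i for 1 \<le> i \<le> m.\<close>
definition Hxi :: "nat \<Rightarrow> (nat \<Rightarrow> real^'n^'n) \<Rightarrow> real^'u^'n \<Rightarrow> real^'n^'y \<Rightarrow> real^'u^'y
    \<Rightarrow> (nat \<Rightarrow> real) \<Rightarrow> real \<Rightarrow> complex \<Rightarrow> complex^('n + 'n)^('n + 'n)" where
  "Hxi m A B C D \<tau> \<xi> z = (\<chi> i j.
      (if i = j then z else 0)
      - complex_of_real (M0 (A 0) B C D \<xi> $ i $ j)
      - (\<Sum>k\<in>{1..m}. complex_of_real (Mpos (A k) $ i $ j) * exp (- z * complex_of_real (\<tau> k))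
                     + complex_of_real (Mneg (A k) $ i $ j) * exp (z * complex_of_real (\<tau> k))))"

definition hxi :: "nat \<Rightarrow> (nat \<Rightarrow> real^'n^'n) \<Rightarrow> real^'u^'n \<Rightarrow> real^'n^'y \<Rightarrow> real^'u^'y
    \<Rightarrow> (nat \<Rightarrow> real) \<Rightarrow> real \<Rightarrow> complex \<Rightarrow> complex" where
  "hxi m A B C D \<tau> \<xi> z = det (Hxi m A B C D \<tau> \<xi> z)"

end

theory Submission
  imports Defs
begin

text \<open>With the symplectic unit \<open>J\<close>, the matrix \<open>M\<^sub>0\<close> is Hamiltonian, \<open>J M\<^sub>0 J\<^sup>T = -M\<^sub>0\<^sup>T\<close>
  (its off-diagonal blocks are symmetric, its diagonal blocks are negative transposes of each
  other), while \<open>J M\<^sub>i J\<^sup>T = -M\<^sub>-\<^sub>i\<^sup>T\<close>. As \<open>\<lambda> \<mapsto> -\<lambda>\<close> exchanges \<open>exp (-\<lambda> \<tau>\<^sub>i)\<close> and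
  \<open>exp (\<lambda> \<tau>\<^sub>i)\<close>, this yields \<open>J H(\<lambda>) J\<^sup>T = -H(-\<lambda>)\<^sup>T\<close>; since \<open>H\<close> has even size,
  \<open>h(-\<lambda>) = h(\<lambda>)\<close>. The coefficients of \<open>H\<close> are real, so \<open>h(cnj \<lambda>) = cnj (h(\<lambda>))\<close>. On the
  imaginary axis \<open>cnj \<lambda> = -\<lambda>\<close>, so \<open>h\<close> is real there, and \<open>h'\<close>, being odd and again
  conjugation-symmetric, is purely imaginary there.\<close>

lemma transpose_zero [simp]: "transpose 0 = (0 :: 'a::zero^'n^'m)"
  by (simp add: vec_eq_iff transpose_def)

lemma transpose_uminus: "transpose (- A) = - transpose (A :: 'a::ab_group_add^'n^'m)"
  by (simp add: vec_eq_iff transpose_def)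

lemma transpose_diff: "transpose (A - B) = transpose A - transpose (B :: 'a::ab_group_add^'n^'m)"
  by (simp add: vec_eq_iff transpose_def)

lemma transpose_matrix_inv_symmetric:
  fixes S :: "'a::field^'n^'n"
  assumes "transpose S = S" and "invertible S"
  shows "transpose (matrix_inv S) = matrix_inv S"
proof -
  let ?X = "matrix_inv S"
  have inv: "S ** ?X = mat 1" "?X ** S = mat 1"
    using assms(2) unfolding invertible_def matrix_inv_def by (metis (mono_tags, lifting) someI_ex)+
  have "transpose ?X ** S = mat 1"
    using arg_cong[OF inv(1), of transpose] assms(1) by (simp add: matrix_transpose_mul)
  then have "transpose ?X = transpose ?X ** (S ** ?X)" using inv by simp
  also have "\<dots> = ?X" by (simp add: matrix_mul_assoc \<open>transpose ?X ** S = mat 1\<close>)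
  finally show ?thesis .
qed

lemma invertible_shifted_gram_swap:
  fixes D :: "real^'u^'y"
  assumes "c \<noteq> 0" and "invertible (transpose D ** D - c *\<^sub>R mat 1)"
  shows "invertible (D ** transpose D - c *\<^sub>R mat 1)"
proof -
  have scalar_mulv: "(k *\<^sub>R mat 1) *v v = k *\<^sub>R v" for k and v :: "real^'a"
    by (simp flip: scaleR_matrix_vector_assoc)
  have kernel_trivial: "y = 0" if "(transpose D ** D - c *\<^sub>R mat 1) *v y = 0" for y
    using assms(2) that matrix_left_invertible_ker invertible_left_inverse by blast
  have "x = 0" if "(D ** transpose D - c *\<^sub>R mat 1) *v x = 0" for x
  proof -
    have Dx: "D *v (transpose D *v x) = c *\<^sub>R x"
      using that by (simp add: matrix_vector_mult_diff_rdistrib scalar_mulv matrix_vector_mul_assoc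
          del: transpose_matrix_vector)
    have "(transpose D ** D - c *\<^sub>R mat 1) *v (transpose D *v x) = 0"
      by (simp add: matrix_vector_mult_diff_rdistrib scalar_mulv Dx matrix_vector_mult_scaleR
          flip: matrix_vector_mul_assoc del: transpose_matrix_vector)
    then have "transpose D *v x = 0" by (rule kernel_trivial)
    then show "x = 0" using Dx assms(1) by simp
  qed
  then show ?thesis using matrix_left_invertible_ker invertible_left_inverse by blast
qed

lemma det_uminus: "det (- A) = (- 1) ^ CARD('n) * det (A :: 'a::comm_ring_1^'n^'n)"
proof -
  have "- A = (\<chi> i. (- 1) *s A $ i)" by (simp add: vec_eq_iff)
  then show ?thesis by (simp add: det_rows_mul)
qed

lemma det_uminus_block: "det (- A) = det (A :: 'a::comm_ring_1^('n::finite + 'n)^('n + 'n))"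
  by (simp add: det_uminus card_Plus flip: mult_2 power_mult)

lemma unit_mult_eq_neg_iff:
  fixes s x y :: "'a::comm_ring_1"
  assumes "s * s = 1"
  shows "s * x = - y \<longleftrightarrow> x = - s * y"
proof
  assume "s * x = - y"
  then have "s * (s * x) = - s * y" by simp
  then show "x = - s * y" by (simp add: assms flip: mult.assoc)
next
  assume "x = - s * y"
  then show "s * x = - y" by (simp add: assms flip: mult.assoc)
qed

definition block_swap :: "'n + 'n \<Rightarrow> 'n + 'n" where
  "block_swap i = (case i of Inl a \<Rightarrow> Inr a | Inr a \<Rightarrow> Inl a)"

definition block_sign :: "'n + 'n \<Rightarrow> 'a::ring_1" where
  "block_sign i = (case i of Inl _ \<Rightarrow> 1 | Inr _ \<Rightarrow> - 1)"

lemma block_swap_eq_iff [simp]: "block_swap i = block_swap j \<longleftrightarrow> i = j"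
  by (cases i; cases j) (simp_all add: block_swap_def)

lemma block_sign_square [simp]: "block_sign i * block_sign i = 1"
  by (cases i) (simp_all add: block_sign_def)

lemma block_sign_pair_square:
  "(block_sign i * block_sign k) * (block_sign i * block_sign k) = (1::'a::comm_ring_1)"
  by (metis block_sign_square mult.left_commute mult.assoc mult_1)

lemma of_real_block_sign [simp]: "of_real (block_sign i) = block_sign i"
  by (cases i) (simp_all add: block_sign_def)

text \<open>This is \<open>J = [[0, I], [-I, 0]]\<close> in the block decomposition given by \<open>Inl\<close>/\<open>Inr\<close>.\<close>
definition symplectic_unit :: "'a::ring_1^('n::finite + 'n)^('n + 'n)" where
  "symplectic_unit = (\<chi> i j. if j = block_swap i then block_sign i else 0)"

lemma symplectic_conj_nth:
  fixes X :: "'a::comm_ring_1^('n::finite + 'n)^('n + 'n)"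
  shows "((symplectic_unit ** X) ** transpose symplectic_unit) $ i $ k
           = block_sign i * block_sign k * X $ block_swap i $ block_swap k"
proof -
  have row: "(symplectic_unit ** X) $ i $ l = block_sign i * X $ block_swap i $ l" for l
    by (simp add: matrix_matrix_mult_def symplectic_unit_def if_distrib[of "\<lambda>c. c * _"]
        cong: if_cong)
  show ?thesis
    by (simp add: matrix_matrix_mult_def symplectic_unit_def transpose_def row
        if_distrib[of "\<lambda>c. _ * c"] mult_ac cong: if_cong)
qed

lemma symplectic_conj_eq_neg_transpose_iff:
  fixes X Y :: "'a::comm_ring_1^('n::finite + 'n)^('n + 'n)"
  shows "(symplectic_unit ** X) ** transpose symplectic_unit = - transpose Y
           \<longleftrightarrow> (\<forall>i k. X $ block_swap i $ block_swap k
                      = - (block_sign i * block_sign k) * Y $ k $ i)"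
proof -
  have "transpose Y $ i $ k = Y $ k $ i" for i k by (simp add: transpose_def)
  then show ?thesis
    unfolding vec_eq_iff symplectic_conj_nth
    by (simp add: unit_mult_eq_neg_iff[OF block_sign_pair_square] del: mult_minus_left)
qed

lemma det_symplectic_conj:
  fixes X :: "'a::comm_ring_1^('n::finite + 'n)^('n + 'n)"
  shows "det ((symplectic_unit ** X) ** transpose symplectic_unit) = det X"
proof -
  let ?J = "symplectic_unit :: 'a^('n + 'n)^('n + 'n)"
  have "(?J ** mat 1) ** transpose ?J = mat 1"
    by (auto simp: vec_eq_iff symplectic_conj_nth mat_def)
  then have "det ?J * det ?J = 1"
    by (metis det_I det_mul det_transpose matrix_mul_rid)
  moreover have "det ((?J ** X) ** transpose ?J) = det ?J * det ?J * det X"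
    by (simp add: det_mul mult_ac)
  ultimately show ?thesis by simp
qed

lemma transpose_blockmat:
  "transpose (blockmat P Q R S) = blockmat (transpose P) (transpose R) (transpose Q) (transpose S)"
  by (simp add: vec_eq_iff blockmat_def transpose_def split: sum.split)

lemma uminus_blockmat: "- blockmat P Q R S = blockmat (- P) (- Q) (- R) (- S)"
  by (simp add: vec_eq_iff blockmat_def split: sum.split)

lemma symplectic_conj_blockmat:
  "(symplectic_unit ** blockmat P Q R S) ** transpose symplectic_unit = blockmat S (- R) (- Q) P"
  by (simp add: vec_eq_iff symplectic_conj_nth blockmat_def block_swap_def block_sign_def
      split: sum.split)

text \<open>Invertibility is needed because \<open>matrix_inv\<close> of a singular matrix is an unspecified
  \<open>SOME\<close>-value, which need not be symmetric.\<close>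
lemma M0_hamiltonian:
  fixes D :: "real^'u^'y"
  assumes "\<xi> \<noteq> 0" and "invertible (Dxi D \<xi>)"
  shows "(symplectic_unit ** M0 A0 B C D \<xi>) ** transpose symplectic_unit
           = - transpose (M0 A0 B C D \<xi>)"
proof -
  let ?X = "matrix_inv (Dxi D \<xi>)" and ?Y = "matrix_inv (Dtxi D \<xi>)"
  have "invertible (Dtxi D \<xi>)"
    using assms invertible_shifted_gram_swap[of "\<xi>\<^sup>2" D] by (simp add: Dxi_def Dtxi_def)
  then have Y_sym: "transpose ?Y = ?Y"
    by (intro transpose_matrix_inv_symmetric)
      (simp_all add: Dtxi_def transpose_diff transpose_scalar matrix_transpose_mul)
  have X_sym: "transpose ?X = ?X"
    using assms(2) by (intro transpose_matrix_inv_symmetric)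
      (simp_all add: Dxi_def transpose_diff transpose_scalar matrix_transpose_mul)
  show ?thesis
    unfolding M0_def symplectic_conj_blockmat transpose_blockmat uminus_blockmat
    by (simp add: transpose_diff transpose_uminus transpose_scalar matrix_transpose_mul
        X_sym Y_sym matrix_mul_assoc)
qed

lemma symplectic_conj_Mpos:
  "(symplectic_unit ** Mpos A) ** transpose symplectic_unit = - transpose (Mneg A)"
  by (simp add: Mpos_def Mneg_def symplectic_conj_blockmat transpose_blockmat uminus_blockmat
      transpose_uminus)

lemma symplectic_conj_Mneg:
  "(symplectic_unit ** Mneg A) ** transpose symplectic_unit = - transpose (Mpos A)"
  by (simp add: Mpos_def Mneg_def symplectic_conj_blockmat transpose_blockmat uminus_blockmat
      transpose_uminus)

lemma Hxi_hamiltonian: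
  fixes D :: "real^'u^'y" and A :: "nat \<Rightarrow> real^'n^'n"
  assumes "\<xi> \<noteq> 0" and "invertible (Dxi D \<xi>)"
  shows "(symplectic_unit ** Hxi m A B C D \<tau> \<xi> z) ** transpose symplectic_unit
           = - transpose (Hxi m A B C D \<tau> \<xi> (- z))"
  unfolding symplectic_conj_eq_neg_transpose_iff
proof (intro allI)
  fix i k :: "'n + 'n"
  let ?s = "block_sign i * block_sign k :: complex"
  have lift: "of_real (X $ block_swap i $ block_swap k) = - ?s * of_real (Y $ k $ i)"
    if "(symplectic_unit ** X) ** transpose symplectic_unit = - transpose Y"
    for X Y :: "real^('n + 'n)^('n + 'n)"
    using that unfolding symplectic_conj_eq_neg_transpose_iff by simp
  have diagonal: "(if block_swap i = block_swap k then z else 0) = - ?s * (if k = i then - z else 0)"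
    by auto
  show "Hxi m A B C D \<tau> \<xi> z $ block_swap i $ block_swap k
          = - ?s * Hxi m A B C D \<tau> \<xi> (- z) $ k $ i"
    by (simp add: Hxi_def diagonal lift[OF M0_hamiltonian[OF assms]] lift[OF symplectic_conj_Mpos]
        lift[OF symplectic_conj_Mneg] sum_distrib_left sum.distrib algebra_simps)
qed

lemma hxi_even:
  fixes D :: "real^'u^'y" and A :: "nat \<Rightarrow> real^'n^'n"
  assumes "\<xi> \<noteq> 0" and "invertible (Dxi D \<xi>)"
  shows "hxi m A B C D \<tau> \<xi> (- z) = hxi m A B C D \<tau> \<xi> z"
  using det_symplectic_conj[of "Hxi m A B C D \<tau> \<xi> z"]
  unfolding hxi_def Hxi_hamiltonian[OF assms] det_uminus_block det_transpose by simp

lemma Hxi_cnj: "Hxi m A B C D \<tau> \<xi> (cnj z) $ i $ j = cnj (Hxi m A B C D \<tau> \<xi> z $ i $ j)"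
  by (simp add: Hxi_def exp_cnj)

lemma hxi_cnj: "hxi m A B C D \<tau> \<xi> (cnj z) = cnj (hxi m A B C D \<tau> \<xi> z)"
  by (simp add: hxi_def det_def Hxi_cnj)

lemma hxi_holomorphic: "hxi m A B C D \<tau> \<xi> holomorphic_on UNIV"
proof -
  have "(\<lambda>z. Hxi m A B C D \<tau> \<xi> z $ i $ j) holomorphic_on UNIV" for i j
    unfolding Hxi_def by (cases "i = j") (auto intro!: holomorphic_intros)
  then show ?thesis
    unfolding hxi_def[abs_def] det_def by (intro holomorphic_intros)
qed

lemma deriv_even_eq_neg:
  assumes "f field_differentiable at (- z)" and "\<And>w. f (- w) = f w"
  shows "deriv f z = - deriv f (- z)"
proof -
  have "deriv f z = deriv (\<lambda>w. f (- 1 * w)) z" using assms(2) by simp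
  also have "\<dots> = - deriv f (- z)" using deriv_compose_linear[of f "- 1" z] assms(1) by simp
  finally show ?thesis .
qed

lemma deriv_cnj_symmetric:
  assumes "f field_differentiable at z" and "\<And>w. f (cnj w) = cnj (f w)"
  shows "deriv f (cnj z) = cnj (deriv f z)"
proof -
  have "cnj \<circ> f \<circ> cnj = f" using assms(2) by (simp add: fun_eq_iff)
  moreover have "((cnj \<circ> f \<circ> cnj) has_field_derivative cnj (deriv f z)) (at (cnj z))"
    using assms(1)
    by (intro has_field_derivative_cnj_cnj) (simp add: DERIV_deriv_iff_field_differentiable)
  ultimately show ?thesis by (simp add: DERIV_imp_deriv)
qed

lemma even_cnj_symmetric_on_imaginary_axis:
  assumes "f holomorphic_on UNIV" and "\<And>w. f (- w) = f w" and "\<And>w. f (cnj w) = cnj (f w)"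
    and "Re z = 0"
  shows "Im (f z) = 0 \<and> Re (deriv f z) = 0"
proof
  have cnj_z: "cnj z = - z" using assms(4) by (simp add: complex_eq_iff)
  have "f z = f (cnj z)" using assms(2) cnj_z by simp
  also have "\<dots> = cnj (f z)" by (rule assms(3))
  finally have "Im (f z) = Im (cnj (f z))" by (rule arg_cong)
  then show "Im (f z) = 0" by simp
  have differentiable: "f field_differentiable at w" for w
    using assms(1) by (simp add: holomorphic_on_imp_differentiable_at)
  have "deriv f z = - deriv f (cnj z)"
    using deriv_even_eq_neg[of f z, OF differentiable assms(2)] cnj_z by simp
  also have "\<dots> = - cnj (deriv f z)"
    using deriv_cnj_symmetric[of f z, OF differentiable assms(3)] by simp
  finally have "Re (deriv f z) = Re (- cnj (deriv f z))" by (rule arg_cong)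
  then show "Re (deriv f z) = 0" by simp
qed

theorem corollary1:
  fixes m :: nat
    and A :: "nat \<Rightarrow> real^'n^'n"
    and B :: "real^'u^'n"
    and C :: "real^'n^'y"
    and D :: "real^'u^'y"
    and \<tau> :: "nat \<Rightarrow> real"
    and \<xi> :: real
  assumes "m \<ge> 1"
    and "\<forall>i\<in>{1..m}. \<tau> i \<ge> 0"
    and "\<xi> > 0"
    and "invertible (Dxi D \<xi>)"
  shows "\<forall>\<omega>::real. \<omega> \<ge> 0 \<longrightarrow>
           Im (hxi m A B C D \<tau> \<xi> (\<i> * complex_of_real \<omega>)) = 0 \<and>
           Re (deriv (hxi m A B C D \<tau> \<xi>) (\<i> * complex_of_real \<omega>)) = 0"
proof (intro allI impI)
  fix \<omega> :: real
  have "\<xi> \<noteq> 0" using assms(3) by simp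
  show "Im (hxi m A B C D \<tau> \<xi> (\<i> * complex_of_real \<omega>)) = 0 \<and>
        Re (deriv (hxi m A B C D \<tau> \<xi>) (\<i> * complex_of_real \<omega>)) = 0"
    by (rule even_cnj_symmetric_on_imaginary_axis
        [OF hxi_holomorphic hxi_even[OF \<open>\<xi> \<noteq> 0\<close> assms(4)] hxi_cnj]) simp
qed

end
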